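(* Let $M\in\mathbb{C}^{d\times d}$ and $w\in\mathbb{C}^d$, and assume $M+we_d^T$ is diagonalizable, $M+we_d^T=X\Lambda X^{-1}$ with $\Lambda=\mathrm{diag}(\lambda_1,\dots,\lambda_d)$. Let $f$ be analytic on an open set containing the eigenvalues of $M$ and of $M+we_d^T$. Then $$f(M+we_d^T)e_1-f(M)e_1=g_w(M)\,w,$$ where $g_w$ is the function defined in the context.
   Context: $e_j$ is the $j$th column of the identity. Divided difference: $f[t,\lambda]=f'(t)$ if $t=\lambda$, and $f[t,\lambda]=\frac{f(t)-f(\lambda)}{t-\lambda}$ otherwise. With $X$ from the eigendecomposition $M+we_d^T=X\Lambda X^{-1}$, set $\alpha_i=e_d^TXe_i$, $\beta_i=e_i^TX^{-1}e_1$, and $g_w(t)=\sum_{i=1}^d\alpha_i\beta_i f[t,\lambda_i]$; $g_w(M)=\sum_{i=1}^d\alpha_i\beta_i f[M,\lambda_i]$, where $f[M,\lambda_i]$ denotes the matrix function of $M$ associated with the analytic function $z\mapsto f[z,\lambda_i]$. *)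

theory Defs
  imports "HOL-Analysis.Analysis" "Jordan_Normal_Form.Jordan_Normal_Form"
begin

definition mat_poly :: "complex poly \<Rightarrow> complex mat \<Rightarrow> complex mat" where
  "mat_poly p A = mat (dim_row A) (dim_col A)
     (\<lambda>(r, c). \<Sum>i\<le>degree p. coeff p i * (A ^\<^sub>m i) $$ (r, c))"

(* primary matrix function f(A) (Higham, Def. 1.4 / Hermite interpolation):
   f(A) = p(A) for any polynomial p interpolating f and its derivatives at
   every eigenvalue z of A up to the multiplicity of z as root of the
   characteristic polynomial. *)
definition mat_fun :: "(complex \<Rightarrow> complex) \<Rightarrow> complex mat \<Rightarrow> complex mat" where
  "mat_fun f A = (THE B. \<exists>p. (\<forall>z. poly (char_poly A) z = 0 \<longrightarrow>
        (\<forall>j < order z (char_poly A). (deriv ^^ j) (poly p) z = (deriv ^^ j) f z))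
      \<and> B = mat_poly p A)"

definition divdiff :: "(complex \<Rightarrow> complex) \<Rightarrow> complex \<Rightarrow> complex \<Rightarrow> complex" where
  "divdiff f t lam = (if t = lam then deriv f t else (f t - f lam) / (t - lam))"

(* the rank-one matrix w e_d^T (d x d, indices 0..d-1, so e_d = unit_vec d (d-1)) *)
definition rank1_last :: "nat \<Rightarrow> complex vec \<Rightarrow> complex mat" where
  "rank1_last d w = mat d d (\<lambda>(i, j). w $ i * (if j = d - 1 then 1 else 0))"

(* g_w(M) = sum_i alpha_i beta_i f[M, lam_i],
   alpha_i = e_d^T X e_i, beta_i = e_i^T X^{-1} e_1 *)
definition g_w_mat :: "(complex \<Rightarrow> complex) \<Rightarrow> nat \<Rightarrow> complex mat \<Rightarrow> complex mat
    \<Rightarrow> (nat \<Rightarrow> complex) \<Rightarrow> complex mat \<Rightarrow> complex mat" where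
  "g_w_mat f d X Xinv lam M = mat d d (\<lambda>(r, c).
      \<Sum>i<d. X $$ (d - 1, i) * Xinv $$ (i, 0) * mat_fun (\<lambda>z. divdiff f z (lam i)) M $$ (r, c))"

end

(*
  Both sides depend on f only through finitely many derivatives at the eigenvalues of M and
  of A = M + w e_d^T, so f may be replaced by a Hermite interpolating polynomial p; if p osculates
  f to one order more on the spectrum of M, then the polynomial p[., l] = (p - p(l)) / (. - l)
  interpolates f[., l] there.  For a polynomial the identity follows along Horner's scheme from
  A^(k+1) e_1 - M^(k+1) e_1 = M (A^k e_1 - M^k e_1) + (e_d^T A^k e_1) w, where
  e_d^T q(A) e_1 = sum_i alpha_i beta_i q(lambda_i) because A is diagonalized by X.
*)

theory Submission
  imports
    Defs
    "HOL-Complex_Analysis.Complex_Analysis"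
    "HOL-Computational_Algebra.Polynomial_Factorial"
    "HOL-Computational_Algebra.Euclidean_Algorithm"
    "HOL-Computational_Algebra.Field_as_Ring"
    "HOL-Computational_Algebra.Fundamental_Theorem_Algebra"
    "Jordan_Normal_Form.Schur_Decomposition"
begin

section \<open>Evaluating polynomials at matrices\<close>

lemma pow_mat_Suc_left:
  assumes A: "(A :: 'a::semiring_1 mat) \<in> carrier_mat n n"
  shows "A ^\<^sub>m Suc k = A * A ^\<^sub>m k"
proof (induct k)
  case 0
  then show ?case using A by simp
next
  case (Suc k)
  have "A ^\<^sub>m Suc (Suc k) = (A * A ^\<^sub>m k) * A" using Suc by simp
  also have "\<dots> = A * (A ^\<^sub>m k * A)" using A by (simp add: assoc_mult_mat[of _ n n _ n _ n])
  finally show ?case by simp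
qed

lemma zero_smult_mat: "A \<in> carrier_mat nr nc \<Longrightarrow> (0 :: 'a::mult_zero) \<cdot>\<^sub>m A = 0\<^sub>m nr nc"
  by (rule eq_matI) auto

lemma smult_one_mult_mat_vec: "x \<in> carrier_vec n \<Longrightarrow> (a \<cdot>\<^sub>m 1\<^sub>m n) *\<^sub>v x = (a :: 'a::comm_ring_1) \<cdot>\<^sub>v x"
  by (rule eq_vecI) (auto simp: row_smult)

lemma mat_poly_carrier [simp]: "A \<in> carrier_mat n n \<Longrightarrow> mat_poly p A \<in> carrier_mat n n"
  unfolding mat_poly_def by auto

lemma dim_mat_poly [simp]: "dim_row (mat_poly p A) = dim_row A" "dim_col (mat_poly p A) = dim_col A"
  unfolding mat_poly_def by auto

lemma mat_poly_0 [simp]: "A \<in> carrier_mat n n \<Longrightarrow> mat_poly 0 A = 0\<^sub>m n n"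
  unfolding mat_poly_def by auto

lemma mat_poly_degree_bound:
  assumes A: "A \<in> carrier_mat n n" and N: "degree p \<le> N"
  shows "mat_poly p A = mat n n (\<lambda>(r, c). \<Sum>i\<le>N. coeff p i * (A ^\<^sub>m i) $$ (r, c))"
proof -
  have "(\<Sum>i\<le>degree p. coeff p i * (A ^\<^sub>m i) $$ (r, c)) = (\<Sum>i\<le>N. coeff p i * (A ^\<^sub>m i) $$ (r, c))"
    for r c
    by (rule sum.mono_neutral_left) (use N in \<open>auto intro!: coeff_eq_0\<close>)
  then show ?thesis using A unfolding mat_poly_def by auto
qed

lemma mat_poly_pCons:
  assumes A: "A \<in> carrier_mat n n"
  shows "mat_poly (pCons a p) A = a \<cdot>\<^sub>m 1\<^sub>m n + A * mat_poly p A"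
proof (rule eq_matI)
  fix r c assume "r < dim_row (a \<cdot>\<^sub>m 1\<^sub>m n + A * mat_poly p A)"
    and "c < dim_col (a \<cdot>\<^sub>m 1\<^sub>m n + A * mat_poly p A)"
  then have r: "r < n" and c: "c < n" using A by auto
  have "mat_poly (pCons a p) A $$ (r, c)
      = (\<Sum>i\<le>Suc (degree p). coeff (pCons a p) i * (A ^\<^sub>m i) $$ (r, c))"
    using mat_poly_degree_bound[OF A degree_pCons_le] r c by simp
  also have "\<dots> = a * 1\<^sub>m n $$ (r, c) + (\<Sum>i\<le>degree p. coeff p i * (A ^\<^sub>m Suc i) $$ (r, c))"
    by (subst sum.atMost_Suc_shift) (use A in simp)
  also have "(\<Sum>i\<le>degree p. coeff p i * (A ^\<^sub>m Suc i) $$ (r, c))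
      = (\<Sum>i\<le>degree p. coeff p i * (\<Sum>k<n. A $$ (r, k) * (A ^\<^sub>m i) $$ (k, c)))"
    using A r c by (simp only: pow_mat_Suc_left[OF A]) (simp add: scalar_prod_def lessThan_atLeast0)
  also have "\<dots> = (\<Sum>k<n. A $$ (r, k) * (\<Sum>i\<le>degree p. coeff p i * (A ^\<^sub>m i) $$ (k, c)))"
    by (simp add: sum_distrib_left algebra_simps) (rule sum.swap)
  also have "\<dots> = (A * mat_poly p A) $$ (r, c)"
    using A r c by (simp add: mat_poly_def scalar_prod_def lessThan_atLeast0)
  finally show "mat_poly (pCons a p) A $$ (r, c) = (a \<cdot>\<^sub>m 1\<^sub>m n + A * mat_poly p A) $$ (r, c)"
    using A r c by simp
qed (use A in \<open>auto simp: mat_poly_def\<close>)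

lemma mat_poly_add:
  assumes A: "A \<in> carrier_mat n n"
  shows "mat_poly (p + q) A = mat_poly p A + mat_poly q A"
proof -
  let ?N = "max (degree p) (degree q)"
  have "mat_poly (p + q) A = mat n n (\<lambda>(r, c). \<Sum>i\<le>?N. coeff (p + q) i * (A ^\<^sub>m i) $$ (r, c))"
    by (rule mat_poly_degree_bound[OF A]) (simp add: degree_add_le)
  moreover have "mat_poly p A = mat n n (\<lambda>(r, c). \<Sum>i\<le>?N. coeff p i * (A ^\<^sub>m i) $$ (r, c))"
    and "mat_poly q A = mat n n (\<lambda>(r, c). \<Sum>i\<le>?N. coeff q i * (A ^\<^sub>m i) $$ (r, c))"
    by (simp_all add: mat_poly_degree_bound[OF A])
  ultimately show ?thesis
    by (auto intro!: eq_matI simp: distrib_right sum.distrib)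
qed

lemma mat_poly_smult:
  assumes A: "A \<in> carrier_mat n n"
  shows "mat_poly (Polynomial.smult a p) A = a \<cdot>\<^sub>m mat_poly p A"
proof -
  have "mat_poly (Polynomial.smult a p) A
      = mat n n (\<lambda>(r, c). \<Sum>i\<le>degree p. coeff (Polynomial.smult a p) i * (A ^\<^sub>m i) $$ (r, c))"
    by (rule mat_poly_degree_bound[OF A]) (simp add: degree_smult_le)
  moreover have "mat_poly p A = mat n n (\<lambda>(r, c). \<Sum>i\<le>degree p. coeff p i * (A ^\<^sub>m i) $$ (r, c))"
    by (simp add: mat_poly_degree_bound[OF A])
  ultimately show ?thesis by (auto intro!: eq_matI simp: sum_distrib_left mult.assoc)
qed

lemma mat_poly_mult:
  assumes A: "A \<in> carrier_mat n n"
  shows "mat_poly (p * q) A = mat_poly p A * mat_poly q A"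
proof (induct p)
  case 0
  then show ?case using A by simp
next
  case (pCons a p)
  have Q: "mat_poly q A \<in> carrier_mat n n" "mat_poly p A \<in> carrier_mat n n" using A by auto
  have "mat_poly (pCons a p * q) A = a \<cdot>\<^sub>m mat_poly q A + A * (mat_poly p A * mat_poly q A)"
    using A Q by (simp add: mat_poly_add[OF A] mat_poly_smult[OF A] mat_poly_pCons[OF A] pCons
        zero_smult_mat[of _ n n] left_add_zero_mat[OF mult_carrier_mat[OF A mult_carrier_mat[OF Q(2,1)]]])
  also have "\<dots> = (a \<cdot>\<^sub>m 1\<^sub>m n + A * mat_poly p A) * mat_poly q A"
    using A Q by (simp add: add_mult_distrib_mat[of _ n n _ _ n] mult_smult_assoc_mat[of _ n n _ n]
        assoc_mult_mat[of A n n _ n _ n])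
  finally show ?case by (simp add: mat_poly_pCons[OF A])
qed

lemma mat_poly_intertwine:
  assumes A: "A \<in> carrier_mat n n" and B: "B \<in> carrier_mat n n" and X: "X \<in> carrier_mat n n"
    and AX: "A * X = X * B"
  shows "mat_poly p A * X = X * mat_poly p B"
proof (induct p)
  case 0
  then show ?case using A B X by simp
next
  case (pCons a p)
  have Q: "mat_poly p A \<in> carrier_mat n n" "mat_poly p B \<in> carrier_mat n n" using A B by auto
  have "mat_poly (pCons a p) A * X = a \<cdot>\<^sub>m X + A * (mat_poly p A * X)"
    using A Q X by (simp add: mat_poly_pCons[OF A] add_mult_distrib_mat[of _ n n] 
        mult_smult_assoc_mat[of _ n n] assoc_mult_mat[of A n n _ n X n])
  also have "\<dots> = a \<cdot>\<^sub>m X + X * (B * mat_poly p B)"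
    using A B Q X AX pCons by (simp add: assoc_mult_mat[of _ n n _ n _ n, symmetric])
  also have "\<dots> = X * mat_poly (pCons a p) B"
    using B Q X by (simp add: mat_poly_pCons[OF B] mult_add_distrib_mat[of X n n _ n] 
        mult_smult_distrib[of X n n _ n])
  finally show ?case .
qed

lemma mat_poly_similar:
  assumes B: "B \<in> carrier_mat n n" and X: "X \<in> carrier_mat n n" and Xinv: "Xinv \<in> carrier_mat n n"
    and inv1: "X * Xinv = 1\<^sub>m n" and inv2: "Xinv * X = 1\<^sub>m n"
  shows "mat_poly p (X * B * Xinv) = X * mat_poly p B * Xinv"
proof -
  let ?A = "X * B * Xinv"
  have A: "?A \<in> carrier_mat n n" using B X Xinv by simp
  have "?A * X = X * B * (Xinv * X)"
    by (rule assoc_mult_mat) (use B X Xinv in auto)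
  then have AX: "?A * X = X * B" using B X by (simp add: inv2)
  have "mat_poly p ?A = mat_poly p ?A * X * Xinv"
    using A X Xinv by (simp add: assoc_mult_mat[of _ n n X n Xinv n] inv1)
  also have "\<dots> = X * mat_poly p B * Xinv" by (simp add: mat_poly_intertwine[OF A B X AX])
  finally show ?thesis .
qed

lemma mat_poly_mat_diag: "mat_poly p (mat_diag n \<mu>) = mat_diag n (\<lambda>i. poly p (\<mu> i))"
proof (induct p)
  case 0
  then show ?case by (rule eq_matI) (auto simp: mat_poly_def mat_diag_def)
next
  case (pCons a p)
  show ?case
    unfolding mat_poly_pCons[OF mat_diag_dim] pCons mat_diag_diag
    by (rule eq_matI) (auto simp: mat_diag_def)
qed

lemma mat_poly_pCons_mult_vec:
  assumes A: "A \<in> carrier_mat n n" and x: "x \<in> carrier_vec n"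
  shows "mat_poly (pCons a p) A *\<^sub>v x = a \<cdot>\<^sub>v x + A *\<^sub>v (mat_poly p A *\<^sub>v x)"
  using A x by (simp add: mat_poly_pCons[OF A] add_mult_distrib_mat_vec[of _ n n] 
      assoc_mult_mat_vec[of A n n _ n x] smult_one_mult_mat_vec)

section \<open>The Cayley--Hamilton theorem\<close>

lemma char_poly_upper_triangular_prod:
  assumes B: "B \<in> carrier_mat n n" and ut: "upper_triangular B"
  shows "char_poly B = (\<Prod>i<n. [:- B $$ (i, i), 1:])"
  using char_poly_upper_triangular[OF B ut] B unfolding diag_mat_def
  by (simp add: prod.distinct_set_conv_list[symmetric] o_def lessThan_atLeast0)

lemma mat_poly_linear_index:
  assumes B: "B \<in> carrier_mat n n" and r: "r < n" and c: "c < n"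
  shows "mat_poly [:a, 1:] B $$ (r, c) = (if r = c then a else 0) + B $$ (r, c)"
  using B r c by (simp add: mat_poly_pCons[OF B] mat_poly_smult[OF B, of 1 1, simplified])

lemma cayley_hamilton_upper_triangular:
  assumes B: "B \<in> carrier_mat n n" and ut: "upper_triangular B"
  shows "mat_poly (char_poly B) B = 0\<^sub>m n n"
proof -
  have "mat_poly (\<Prod>i<k. [:- B $$ (i, i), 1:]) B $$ (r, c) = 0" if "k \<le> n" "r < n" "c < k" for k r c
    using that
  proof (induct k arbitrary: r c)
    case 0
    then show ?case by simp
  next
    case (Suc k)
    let ?P = "mat_poly (\<Prod>i<k. [:- B $$ (i, i), 1:]) B"
    let ?L = "mat_poly [:- B $$ (k, k), 1:] B"
    have PL: "?P \<in> carrier_mat n n" "?L \<in> carrier_mat n n" using B by auto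
    have "mat_poly (\<Prod>i<Suc k. [:- B $$ (i, i), 1:]) B $$ (r, c) = (?P * ?L) $$ (r, c)"
      by (simp only: prod.lessThan_Suc mat_poly_mult[OF B])
    also have "\<dots> = (\<Sum>j<n. ?P $$ (r, j) * ?L $$ (j, c))"
      using PL Suc.prems by (simp add: scalar_prod_def lessThan_atLeast0 carrier_matD[OF B])
    also have "\<dots> = 0"
    proof (rule sum.neutral, intro ballI)
      fix j assume j: "j \<in> {..<n}"
      have "?L $$ (j, c) = 0" if "\<not> j < k"
        using that j Suc.prems ut B by (auto simp: mat_poly_linear_index[OF B] upper_triangular_def less_Suc_eq)
      then show "?P $$ (r, j) * ?L $$ (j, c) = 0" using Suc j by fastforce
    qed
    finally show ?case .
  qed
  then show ?thesis
    using B by (auto intro!: eq_matI simp: char_poly_upper_triangular_prod[OF B ut])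
qed

theorem cayley_hamilton:
  assumes A: "A \<in> carrier_mat n n"
  shows "mat_poly (char_poly A) A = 0\<^sub>m n n"
proof -
  obtain es where "char_poly A = (\<Prod>a\<leftarrow>es. [:- a, 1:])" using char_poly_factorized[OF A] by blast
  then obtain B where B: "B \<in> carrier_mat n n" "upper_triangular B" "similar_mat A B"
    using schur_upper_triangular[OF A] by blast
  obtain P Q where PQ: "P \<in> carrier_mat n n" "Q \<in> carrier_mat n n" "P * Q = 1\<^sub>m n" "Q * P = 1\<^sub>m n"
    and APBQ: "A = P * B * Q"
    using similar_matD[OF B(3)] A by (metis carrier_matD(1) insert_subset)
  have "mat_poly (char_poly B) A = P * mat_poly (char_poly B) B * Q"
    unfolding APBQ by (rule mat_poly_similar[OF B(1) PQ])
  then show ?thesis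
    unfolding char_poly_similar[OF B(3)]
    using PQ by (simp add: cayley_hamilton_upper_triangular[OF B(1,2)])
qed

lemma diagonalizable_eigenvalue:
  fixes \<mu> :: "nat \<Rightarrow> 'a::field"
  assumes X: "X \<in> carrier_mat n n" and Xinv: "Xinv \<in> carrier_mat n n"
    and inv1: "X * Xinv = 1\<^sub>m n" and inv2: "Xinv * X = 1\<^sub>m n" and i: "i < n"
  shows "eigenvalue (X * mat_diag n \<mu> * Xinv) (\<mu> i)"
proof -
  have "similar_mat (X * mat_diag n \<mu> * Xinv) (mat_diag n \<mu>)"
    by (rule similar_matI[of _ _ X Xinv n]) (use X Xinv inv1 inv2 in auto)
  moreover have "char_poly (mat_diag n \<mu>) = (\<Prod>j<n. [:- \<mu> j, 1:])"
    using char_poly_upper_triangular_prod[of "mat_diag n \<mu>" n]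
    by (simp add: upper_triangular_def mat_diag_def)
  ultimately have "poly (char_poly (X * mat_diag n \<mu> * Xinv)) (\<mu> i) = (\<Prod>j<n. \<mu> i - \<mu> j)"
    by (simp add: char_poly_similar poly_prod)
  also have "\<dots> = 0" by (rule prod_zero) (use i in auto)
  finally show ?thesis
    using eigenvalue_root_char_poly[OF mult_carrier_mat[OF mult_carrier_mat[OF X mat_diag_dim] Xinv]] by simp
qed

section \<open>Hermite interpolation\<close>

lemma higher_deriv_poly: "(deriv ^^ j) (poly p) = poly ((pderiv ^^ j) (p :: complex poly))"
proof (induct j)
  case (Suc j)
  have "deriv (poly q) = poly (pderiv q)" for q :: "complex poly"
    by (rule ext, rule DERIV_imp_deriv, rule poly_DERIV)
  then show ?case using Suc by simp
qed simp

lemma higher_pderiv_diff: "(pderiv ^^ j) (p - q) = (pderiv ^^ j) p - (pderiv ^^ j) (q :: 'a::idom poly)"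
  by (induct j) (simp_all add: pderiv_diff)

lemma linear_power_Suc_dvd_iff:
  fixes r :: "'a::{idom,semiring_char_0} poly"
  shows "[:-z, 1:] ^ Suc m dvd r \<longleftrightarrow> poly r z = 0 \<and> [:-z, 1:] ^ m dvd pderiv r"
proof (cases "r \<noteq> 0 \<and> poly r z = 0")
  case True
  then have r: "r \<noteq> 0" "poly r z = 0" by auto
  have "pderiv r \<noteq> 0"
  proof
    assume "pderiv r = 0"
    then obtain h where "r = [:h:]" using pderiv_iszero by blast
    then show False using r by simp
  qed
  then show ?thesis using order_pderiv[OF r] r unfolding order_divides by simp
next
  case False
  have "[:-z, 1:] dvd [:-z, 1:] ^ Suc m" by (rule dvd_power) simp
  then have "poly r z = 0" if "[:-z, 1:] ^ Suc m dvd r"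
    using that dvd_trans poly_eq_0_iff_dvd by blast
  then show ?thesis using False by auto
qed

lemma higher_pderiv_vanish_iff_dvd:
  fixes r :: "'a::{idom,semiring_char_0} poly"
  shows "(\<forall>j<m. poly ((pderiv ^^ j) r) z = 0) \<longleftrightarrow> [:-z, 1:] ^ m dvd r"
proof (induct m arbitrary: r)
  case (Suc m)
  have "(\<forall>j<Suc m. poly ((pderiv ^^ j) r) z = 0)
      \<longleftrightarrow> poly r z = 0 \<and> (\<forall>j<m. poly ((pderiv ^^ j) (pderiv r)) z = 0)"
    by (simp add: All_less_Suc2 funpow_Suc_right del: funpow.simps)
  also have "\<dots> \<longleftrightarrow> poly r z = 0 \<and> [:-z, 1:] ^ m dvd pderiv r" by (simp add: Suc)
  also have "\<dots> \<longleftrightarrow> [:-z, 1:] ^ Suc m dvd r" by (rule linear_power_Suc_dvd_iff[symmetric])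
  finally show ?case .
qed simp

lemma exists_poly_higher_pderiv_at:
  "\<exists>T. \<forall>j<m. poly ((pderiv ^^ j) T) z = (F j :: 'a::field_char_0)"
proof -
  let ?P = "\<Sum>k<m. monom (F k / fact k) k"
  have shift: "(pderiv ^^ j) (pcompose p [:-z, 1:]) = pcompose ((pderiv ^^ j) p) [:-z, 1:]" for j p
    by (induct j) (simp_all add: pderiv_pcompose pderiv_pCons)
  have "poly ((pderiv ^^ j) (pcompose ?P [:-z, 1:])) z = F j" if "j < m" for j
  proof -
    have "poly ((pderiv ^^ j) (pcompose ?P [:-z, 1:])) z = coeff ((pderiv ^^ j) ?P) 0"
      by (simp add: shift poly_pcompose poly_0_coeff_0)
    also have "\<dots> = fact j * coeff ?P j" by (simp add: coeff_higher_pderiv pochhammer_fact)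
    also have "\<dots> = F j" using that by (simp add: coeff_sum coeff_monom)
    finally show ?thesis .
  qed
  then show ?thesis by blast
qed

lemma coprime_linear_poly:
  assumes "z \<noteq> (a :: 'a::field)"
  shows "coprime [:-z, 1:] [:-a, 1:]"
proof (rule coprimeI)
  fix c assume "c dvd [:-z, 1:]" and "c dvd [:-a, 1:]"
  then have "c dvd [:-z, 1:] - [:-a, 1:]" by (rule dvd_diff)
  moreover have "[:-z, 1:] - [:-a, 1:] = [:a - z:]" by simp
  moreover have "is_unit [:a - z:]" using assms by (simp add: is_unit_const_poly_iff)
  ultimately show "is_unit c" by (metis dvd_unit_imp_unit)
qed

lemma coprime_linear_power_prod:
  assumes "a \<notin> Z"
  shows "coprime ([:-a, 1:] ^ k) (\<Prod>z\<in>Z. [:-z, 1:] ^ m z :: 'a::field_gcd poly)"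
proof (intro prod_coprime_right)
  fix z assume "z \<in> Z"
  then show "coprime ([:-a, 1:] ^ k) ([:-z, 1:] ^ m z)"
    using assms coprime_linear_poly[of a z] by auto
qed

lemma prod_linear_powers_dvd:
  fixes r :: "'a::field_gcd poly"
  assumes "finite Z" and "\<And>z. z \<in> Z \<Longrightarrow> [:-z, 1:] ^ m z dvd r"
  shows "(\<Prod>z\<in>Z. [:-z, 1:] ^ m z) dvd r"
  using assms
proof (induct Z rule: finite_induct)
  case (insert a Z)
  have "[:-a, 1:] ^ m a dvd r" and "(\<Prod>z\<in>Z. [:-z, 1:] ^ m z) dvd r" using insert by simp_all
  then have "[:-a, 1:] ^ m a * (\<Prod>z\<in>Z. [:-z, 1:] ^ m z) dvd r"
    by (rule divides_mult[OF _ _ coprime_linear_power_prod[OF insert.hyps(2)]])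
  then show ?case using insert.hyps by simp
qed simp

theorem hermite_interpolation_exists:
  fixes Z :: "complex set"
  assumes "finite Z"
  shows "\<exists>p. \<forall>z\<in>Z. \<forall>j<m z. poly ((pderiv ^^ j) p) z = F z j"
  using assms
proof (induct Z rule: finite_induct)
  case empty
  then show ?case by simp
next
  case (insert a Z)
  obtain p where p: "\<forall>z\<in>Z. \<forall>j<m z. poly ((pderiv ^^ j) p) z = F z j" using insert by blast
  obtain T where T: "\<forall>j<m a. poly ((pderiv ^^ j) T) a = F a j"
    using exists_poly_higher_pderiv_at by blast
  define Q where "Q = (\<Prod>z\<in>Z. [:-z, 1:] ^ m z)"
  define R where "R = [:-a, 1:] ^ m a"
  have "coprime Q R"
    unfolding Q_def R_def using coprime_linear_power_prod[OF insert.hyps(2)] by (simp add: ac_simps)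
  then obtain u v where uv: "u * Q + v * R = 1"
    using bezout_coefficients_fst_snd[of Q R] by (metis coprime_iff_gcd_eq_1)
  \<comment> \<open>Chinese remaindering: the correction term is divisible by Q and agrees with T - p modulo R\<close>
  define p' where "p' = p + Q * (u * (T - p))"
  have "\<forall>j<m z. poly ((pderiv ^^ j) p') z = F z j" if z: "z \<in> insert a Z" for z
  proof (cases "z = a")
    case True
    have "p' - T = (p - T) * (1 - u * Q)" unfolding p'_def by (simp add: algebra_simps)
    also have "1 - u * Q = v * R" using uv by (simp add: algebra_simps)
    finally have "[:-a, 1:] ^ m a dvd p' - T" unfolding R_def by simp
    then show ?thesis
      using T True by (simp add: higher_pderiv_vanish_iff_dvd[symmetric] higher_pderiv_diff)
  next
    case False
    then have "z \<in> Z" using z by simp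
    then have "[:-z, 1:] ^ m z dvd Q * (u * (T - p))"
      unfolding Q_def using insert.hyps(1) by (intro dvd_mult2 dvd_prodI)
    then show ?thesis
      using p \<open>z \<in> Z\<close> by (simp add: higher_pderiv_vanish_iff_dvd[symmetric] p'_def higher_pderiv_add)
  qed
  then show ?case by blast
qed

definition interpolates_on_spectrum :: "complex poly \<Rightarrow> (complex \<Rightarrow> complex) \<Rightarrow> complex mat \<Rightarrow> bool"
  where "interpolates_on_spectrum p f A \<longleftrightarrow> (\<forall>z. poly (char_poly A) z = 0 \<longrightarrow>
      (\<forall>j < Polynomial.order z (char_poly A). (deriv ^^ j) (poly p) z = (deriv ^^ j) f z))"

lemma mat_poly_eq_if_interpolates_on_spectrum:
  assumes A: "A \<in> carrier_mat n n"
    and p: "interpolates_on_spectrum p f A" and q: "interpolates_on_spectrum q f A"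
  shows "mat_poly p A = mat_poly q A"
proof -
  let ?P = "char_poly A"
  have "[:-z, 1:] ^ Polynomial.order z ?P dvd p - q" if "poly ?P z = 0" for z
    using p q that
    by (simp add: interpolates_on_spectrum_def higher_pderiv_vanish_iff_dvd[symmetric]
        higher_deriv_poly higher_pderiv_diff)
  then have "(\<Prod>z | poly ?P z = 0. [:-z, 1:] ^ Polynomial.order z ?P) dvd p - q"
    using degree_monic_char_poly[OF A] by (intro prod_linear_powers_dvd poly_roots_finite) auto
  moreover have "(\<Prod>z | poly ?P z = 0. [:-z, 1:] ^ Polynomial.order z ?P) = ?P"
    using complex_poly_decompose[of ?P] degree_monic_char_poly[OF A] by simp
  ultimately obtain h where h: "p - q = ?P * h" by (auto elim: dvdE)
  have "mat_poly p A = mat_poly q A + mat_poly ?P A * mat_poly h A"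
    by (metis h diff_add_cancel add.commute mat_poly_add[OF A] mat_poly_mult[OF A])
  then show ?thesis using A by (simp add: cayley_hamilton[OF A])
qed

lemma mat_fun_eq_mat_poly:
  assumes A: "A \<in> carrier_mat n n" and p: "interpolates_on_spectrum p f A"
  shows "mat_fun f A = mat_poly p A"
  unfolding mat_fun_def interpolates_on_spectrum_def[symmetric]
  using p mat_poly_eq_if_interpolates_on_spectrum[OF A] by (intro the_equality) blast+

section \<open>Divided differences\<close>

lemma divdiff_holomorphic:
  assumes "h holomorphic_on S" "open S"
  shows "(\<lambda>t. divdiff h t l) holomorphic_on S"
proof -
  have "(\<lambda>t. divdiff h t l) = (\<lambda>t. if t = l then deriv h l else (h t - h l) / (t - l))"
    by (auto simp: divdiff_def)
  then show ?thesis using pole_lemma_open[OF assms] by simp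
qed

text \<open>Leibniz's rule applied to h(t) = (t - l) h[t, l].\<close>

lemma higher_deriv_divdiff:
  assumes hol: "h holomorphic_on S" and S: "open S" and hl: "h l = 0" and t: "t \<in> S"
  shows "(deriv ^^ Suc n) h t = (t - l) * (deriv ^^ Suc n) (\<lambda>t. divdiff h t l) t
           + of_nat (Suc n) * (deriv ^^ n) (\<lambda>t. divdiff h t l) t"
proof -
  let ?g = "\<lambda>t. divdiff h t l"
  have lin: "(deriv ^^ i) (\<lambda>t. t - l) t = (if i = 0 then t - l else if i = 1 then 1 else 0)" for i
    using higher_deriv_diff[where f="\<lambda>t. t" and g="\<lambda>t. l" and S=UNIV] by simp
  have "h = (\<lambda>t. (t - l) * ?g t)" by (auto simp: divdiff_def hl)
  then have "(deriv ^^ Suc n) h t = (deriv ^^ Suc n) (\<lambda>t. (t - l) * ?g t) t"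
    by (rule arg_cong[where f="\<lambda>F. (deriv ^^ Suc n) F t"])
  also have "\<dots>
      = (\<Sum>i = 0..Suc n. of_nat (Suc n choose i) * (deriv ^^ i) (\<lambda>t. t - l) t * (deriv ^^ (Suc n - i)) ?g t)"
    by (rule higher_deriv_mult[OF _ divdiff_holomorphic[OF hol S] S t]) (intro holomorphic_intros)
  also have "\<dots> = (\<Sum>i \<in> {0, 1}. of_nat (Suc n choose i) * (deriv ^^ i) (\<lambda>t. t - l) t * (deriv ^^ (Suc n - i)) ?g t)"
    by (rule sum.mono_neutral_right) (auto simp: lin)
  also have "\<dots> = (t - l) * (deriv ^^ Suc n) ?g t + of_nat (Suc n) * (deriv ^^ n) ?g t"
    by (simp add: lin)
  finally show ?thesis .
qed

lemma higher_deriv_divdiff_eq_0: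
  assumes hol: "h holomorphic_on S" and S: "open S" and z: "z \<in> S" and hl: "h l = 0"
    and vanish: "\<And>j. j \<le> m \<Longrightarrow> (deriv ^^ j) h z = 0" and n: "n < m"
  shows "(deriv ^^ n) (\<lambda>t. divdiff h t l) z = 0"
proof (cases "z = l")
  case True
  then show ?thesis
    using higher_deriv_divdiff[OF hol S hl z, of n] vanish[of "Suc n"] n by (simp del: of_nat_Suc)
next
  case False
  show ?thesis
    using n
  proof (induct n)
    case 0
    then show ?case using vanish[of 0] False hl by (simp add: divdiff_def)
  next
    case (Suc n)
    then show ?case using higher_deriv_divdiff[OF hol S hl z, of n] vanish[of "Suc n"] False by simp
  qed
qed

lemma poly_synthetic_div_eq_divdiff: "poly (synthetic_div p c) = (\<lambda>t. divdiff (poly p) t c)"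
proof
  fix t
  let ?q = "synthetic_div p c"
  have pq: "p = [:-c, 1:] * ?q + [:poly p c:]" using synthetic_div_correct'[of c p] by simp
  show "poly ?q t = divdiff (poly p) t c"
  proof (cases "t = c")
    case True
    have "pderiv p = pderiv ([:-c, 1:] * ?q)" by (subst pq) (simp add: pderiv_add pderiv_pCons)
    also have "\<dots> = [:-c, 1:] * pderiv ?q + ?q * pderiv [:-c, 1:]" by (rule pderiv_mult)
    finally have "poly (pderiv p) c = poly ?q c" by (simp add: pderiv_pCons)
    then show ?thesis
      using True by (simp add: divdiff_def higher_deriv_poly[of 1, simplified])
  next
    case False
    have "poly p t = (t - c) * poly ?q t + poly p c"
      by (subst pq) (simp add: algebra_simps)
    then show ?thesis using False by (simp add: divdiff_def field_simps)
  qed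
qed

lemma higher_deriv_synthetic_div_eq_divdiff:
  assumes hol: "f holomorphic_on S" and S: "open S" and l: "l \<in> S" and z: "z \<in> S"
    and fl: "poly p l = f l"
    and osc: "\<And>j. j \<le> m \<Longrightarrow> (deriv ^^ j) (poly p) z = (deriv ^^ j) f z" and n: "n < m"
  shows "(deriv ^^ n) (poly (synthetic_div p l)) z = (deriv ^^ n) (\<lambda>t. divdiff f t l) z"
proof -
  define h where "h = (\<lambda>t. f t - poly p t)"
  have holp: "poly p holomorphic_on S" by (intro holomorphic_intros)
  have holh: "h holomorphic_on S" unfolding h_def by (intro holomorphic_intros hol)
  have "divdiff h t l = divdiff f t l - divdiff (poly p) t l" for t
  proof (cases "t = l")
    case True
    have "f field_differentiable at l" using hol S l holomorphic_on_imp_differentiable_at by blast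
    moreover have "poly p field_differentiable at l" using holp S l holomorphic_on_imp_differentiable_at by blast
    ultimately show ?thesis using True unfolding h_def divdiff_def by (simp add: deriv_diff)
  qed (simp add: h_def divdiff_def diff_divide_distrib)
  then have "(deriv ^^ n) (\<lambda>t. divdiff h t l) z
      = (deriv ^^ n) (\<lambda>t. divdiff f t l) z - (deriv ^^ n) (\<lambda>t. divdiff (poly p) t l) z"
    by (simp add: higher_deriv_diff[OF divdiff_holomorphic[OF hol S] divdiff_holomorphic[OF holp S] S z])
  moreover have "(deriv ^^ n) (\<lambda>t. divdiff h t l) z = 0"
  proof (rule higher_deriv_divdiff_eq_0[OF holh S z _ _ n])
    show "h l = 0" using fl by (simp add: h_def)
    show "(deriv ^^ j) h z = 0" if "j \<le> m" for j
      using osc[OF that] unfolding h_def by (simp add: higher_deriv_diff[OF hol holp S z])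
  qed
  ultimately show ?thesis by (simp add: poly_synthetic_div_eq_divdiff)
qed

lemma exists_common_interpolant:
  fixes A M :: "complex mat"
  assumes A: "A \<in> carrier_mat n n" and M: "M \<in> carrier_mat n n"
    and S: "open S" and hol: "f holomorphic_on S"
    and eigA: "\<And>z. eigenvalue A z \<Longrightarrow> z \<in> S" and eigM: "\<And>z. eigenvalue M z \<Longrightarrow> z \<in> S"
    and lam: "\<And>i. i \<in> I \<Longrightarrow> eigenvalue A (lam i)"
  obtains p where "mat_fun f A = mat_poly p A" and "mat_fun f M = mat_poly p M"
    and "\<And>i. i \<in> I \<Longrightarrow> mat_fun (\<lambda>z. divdiff f z (lam i)) M = mat_poly (synthetic_div p (lam i)) M"
proof -
  let ?PA = "char_poly A" and ?PM = "char_poly M"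
  define Z where "Z = {z. poly ?PA z = 0} \<union> {z. poly ?PM z = 0}"
  have "?PA \<noteq> 0" "?PM \<noteq> 0"
    using degree_monic_char_poly[OF A] degree_monic_char_poly[OF M] by auto
  then have "finite Z" unfolding Z_def by (simp add: poly_roots_finite)
  \<comment> \<open>one extra order of contact on the spectrum of M makes p[\<cdot>, l] interpolate f[\<cdot>, l] there\<close>
  then obtain p where p: "\<And>z j. z \<in> Z \<Longrightarrow> j < Polynomial.order z ?PA + Suc (Polynomial.order z ?PM)
      \<Longrightarrow> (deriv ^^ j) (poly p) z = (deriv ^^ j) f z"
    using hermite_interpolation_exists[of Z "\<lambda>z. Polynomial.order z ?PA + Suc (Polynomial.order z ?PM)"
        "\<lambda>z j. (deriv ^^ j) f z"]
    by (auto simp: higher_deriv_poly)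
  have ZS: "z \<in> S" if "z \<in> Z" for z
    using that eigA eigM unfolding Z_def eigenvalue_root_char_poly[OF A] eigenvalue_root_char_poly[OF M] by blast
  show thesis
  proof (rule that)
    show "mat_fun f A = mat_poly p A"
      by (rule mat_fun_eq_mat_poly[OF A]) (auto simp: interpolates_on_spectrum_def Z_def intro!: p)
    show "mat_fun f M = mat_poly p M"
      by (rule mat_fun_eq_mat_poly[OF M]) (auto simp: interpolates_on_spectrum_def Z_def intro!: p)
  next
    fix i assume "i \<in> I"
    then have lZ: "lam i \<in> Z" using lam unfolding Z_def eigenvalue_root_char_poly[OF A] by blast
    show "mat_fun (\<lambda>z. divdiff f z (lam i)) M = mat_poly (synthetic_div p (lam i)) M"
    proof (rule mat_fun_eq_mat_poly[OF M], unfold interpolates_on_spectrum_def, intro allI impI)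
      fix z j assume "poly ?PM z = 0" and j: "j < Polynomial.order z ?PM"
      then have zZ: "z \<in> Z" unfolding Z_def by blast
      show "(deriv ^^ j) (poly (synthetic_div p (lam i))) z = (deriv ^^ j) (\<lambda>z. divdiff f z (lam i)) z"
      proof (rule higher_deriv_synthetic_div_eq_divdiff[OF hol S ZS[OF lZ] ZS[OF zZ] _ _ j])
        show "poly p (lam i) = f (lam i)" using p[OF lZ, of 0] by simp
        show "(deriv ^^ k) (poly p) z = (deriv ^^ k) f z" if "k \<le> Polynomial.order z ?PM" for k
          using p[OF zZ] that by simp
      qed
    qed
  qed
qed

section \<open>Rank-one updates\<close>

lemma index_mult_mat_vec_sum:
  "B \<in> carrier_mat n n \<Longrightarrow> x \<in> carrier_vec n \<Longrightarrow> i < n \<Longrightarrow> (B *\<^sub>v x) $ i = (\<Sum>j<n. B $$ (i, j) * x $ j)"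
  by (simp add: scalar_prod_def lessThan_atLeast0)

lemma index_mat_diag_mult_vec: "y \<in> carrier_vec n \<Longrightarrow> i < n \<Longrightarrow> (mat_diag n \<mu> *\<^sub>v y) $ i = \<mu> i * y $ i"
  by (simp add: mat_diag_mult_left[of _ n 1, symmetric] mat_diag_def scalar_prod_def sum.remove)

text \<open>The hypothesis update encodes A = M + w e_k^T; the claim follows along Horner's scheme.\<close>

lemma mat_poly_rank_one_update:
  assumes A: "A \<in> carrier_mat n n" and M: "M \<in> carrier_mat n n"
    and w: "w \<in> carrier_vec n" and x: "x \<in> carrier_vec n"
    and update: "\<And>y. y \<in> carrier_vec n \<Longrightarrow> A *\<^sub>v y = M *\<^sub>v y + y $ k \<cdot>\<^sub>v w"
    and spectral: "\<And>q. (mat_poly q A *\<^sub>v x) $ k = (\<Sum>i\<in>I. c i * poly q (lam i))"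
    and r: "r < n"
  shows "(mat_poly p A *\<^sub>v x) $ r - (mat_poly p M *\<^sub>v x) $ r
     = (\<Sum>i\<in>I. c i * (mat_poly (synthetic_div p (lam i)) M *\<^sub>v w) $ r)"
  using r
proof (induct p arbitrary: r)
  case 0
  then show ?case using A M x w by simp
next
  case (pCons a q r)
  let ?u = "mat_poly q A *\<^sub>v x" and ?v = "mat_poly q M *\<^sub>v x"
  let ?S = "\<lambda>i. mat_poly (synthetic_div q (lam i)) M *\<^sub>v w"
  have u: "?u \<in> carrier_vec n" and v: "?v \<in> carrier_vec n"
    using mult_mat_vec_carrier[OF mat_poly_carrier x] A M by blast+
  have "(mat_poly (pCons a q) A *\<^sub>v x) $ r - (mat_poly (pCons a q) M *\<^sub>v x) $ r
      = (A *\<^sub>v ?u) $ r - (M *\<^sub>v ?v) $ r"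
    using A M x u v pCons.prems by (simp add: mat_poly_pCons_mult_vec)
  also have "\<dots> = (M *\<^sub>v (?u - ?v)) $ r + ?u $ k * w $ r"
    using M w u v pCons.prems by (simp add: update mult_minus_distrib_mat_vec[OF M u v])
  also have "(M *\<^sub>v (?u - ?v)) $ r = (\<Sum>j<n. M $$ (r, j) * (?u - ?v) $ j)"
    using u v by (intro index_mult_mat_vec_sum[OF M _ pCons.prems]) simp
  also have "\<dots> = (\<Sum>j<n. M $$ (r, j) * (\<Sum>i\<in>I. c i * ?S i $ j))"
    using pCons.hyps(2) u v M by (intro sum.cong) (simp_all add: carrier_vecD)
  also have "\<dots> = (\<Sum>i\<in>I. c i * (\<Sum>j<n. M $$ (r, j) * ?S i $ j))"
    by (simp add: sum_distrib_left algebra_simps) (rule sum.swap)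
  also have "\<dots> = (\<Sum>i\<in>I. c i * (M *\<^sub>v ?S i) $ r)"
    by (intro sum.cong refl arg_cong[where f="\<lambda>t. c _ * t"] index_mult_mat_vec_sum[OF M _ pCons.prems, symmetric])
      (rule mult_mat_vec_carrier[OF mat_poly_carrier[OF M] w])
  also have "?u $ k * w $ r = (\<Sum>i\<in>I. c i * (poly q (lam i) * w $ r))"
    by (simp only: spectral sum_distrib_right mult.assoc)
  also have "(\<Sum>i\<in>I. c i * (M *\<^sub>v ?S i) $ r) + (\<Sum>i\<in>I. c i * (poly q (lam i) * w $ r))
      = (\<Sum>i\<in>I. c i * (poly q (lam i) * w $ r + (M *\<^sub>v ?S i) $ r))"
    by (simp only: distrib_left sum.distrib add.commute)
  also have "\<dots> = (\<Sum>i\<in>I. c i * (mat_poly (synthetic_div (pCons a q) (lam i)) M *\<^sub>v w) $ r)"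
    using M w pCons.prems by (simp add: mat_poly_pCons_mult_vec[OF M w] del: index_mult_mat_vec)
  finally show ?case .
qed

lemma index_mat_poly_diagonalizable_mult_vec:
  assumes X: "X \<in> carrier_mat n n" and Xinv: "Xinv \<in> carrier_mat n n"
    and inv1: "X * Xinv = 1\<^sub>m n" and inv2: "Xinv * X = 1\<^sub>m n"
    and x: "x \<in> carrier_vec n" and k: "k < n"
  shows "(mat_poly q (X * mat_diag n \<mu> * Xinv) *\<^sub>v x) $ k
      = (\<Sum>i<n. X $$ (k, i) * (Xinv *\<^sub>v x) $ i * poly q (\<mu> i))"
proof -
  let ?D = "mat_diag n (\<lambda>i. poly q (\<mu> i))"
  have "mat_poly q (X * mat_diag n \<mu> * Xinv) *\<^sub>v x = X *\<^sub>v (?D *\<^sub>v (Xinv *\<^sub>v x))"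
    using X Xinv x
    by (simp add: mat_poly_similar[OF mat_diag_dim X Xinv inv1 inv2] mat_poly_mat_diag
        assoc_mult_mat_vec[of _ n n _ n])
  also have "\<dots> $ k = (\<Sum>i<n. X $$ (k, i) * (?D *\<^sub>v (Xinv *\<^sub>v x)) $ i)"
    using X Xinv x k by (intro index_mult_mat_vec_sum) (auto intro: mult_mat_vec_carrier[OF mat_diag_dim])
  also have "\<dots> = (\<Sum>i<n. X $$ (k, i) * (Xinv *\<^sub>v x) $ i * poly q (\<mu> i))"
    using Xinv x by (intro sum.cong) (auto simp: index_mat_diag_mult_vec)
  finally show ?thesis .
qed

lemma rank1_last_carrier [simp]: "rank1_last d w \<in> carrier_mat d d"
  by (simp add: rank1_last_def)

lemma rank1_last_mult_vec:
  assumes d: "d > 0" and w: "w \<in> carrier_vec d" and y: "y \<in> carrier_vec d"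
  shows "rank1_last d w *\<^sub>v y = y $ (d - 1) \<cdot>\<^sub>v w"
proof (rule eq_vecI)
  fix i assume "i < dim_vec (y $ (d - 1) \<cdot>\<^sub>v w)"
  then have i: "i < d" using w by simp
  have "(rank1_last d w *\<^sub>v y) $ i = (\<Sum>j<d. w $ i * (if j = d - 1 then 1 else 0) * y $ j)"
    using y i by (subst index_mult_mat_vec_sum[of _ d]) (auto simp: rank1_last_def)
  also have "\<dots> = (\<Sum>j<d. if j = d - 1 then y $ j * w $ i else 0)"
    by (intro sum.cong) auto
  also have "\<dots> = (y $ (d - 1) \<cdot>\<^sub>v w) $ i" using d w i by simp
  finally show "(rank1_last d w *\<^sub>v y) $ i = (y $ (d - 1) \<cdot>\<^sub>v w) $ i" .
qed (use w in \<open>simp add: rank1_last_def\<close>)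

lemma index_lincomb_mat_mult_vec:
  assumes "\<And>i. i \<in> I \<Longrightarrow> B i \<in> carrier_mat n n" and w: "w \<in> carrier_vec n" and r: "r < n"
  shows "(mat n n (\<lambda>(r, s). \<Sum>i\<in>I. c i * B i $$ (r, s)) *\<^sub>v w) $ r = (\<Sum>i\<in>I. c i * (B i *\<^sub>v w) $ r)"
proof -
  have "(mat n n (\<lambda>(r, s). \<Sum>i\<in>I. c i * B i $$ (r, s)) *\<^sub>v w) $ r
      = (\<Sum>s<n. mat n n (\<lambda>(r, s). \<Sum>i\<in>I. c i * B i $$ (r, s)) $$ (r, s) * w $ s)"
    using w r by (intro index_mult_mat_vec_sum) auto
  also have "\<dots> = (\<Sum>s<n. (\<Sum>i\<in>I. c i * B i $$ (r, s)) * w $ s)"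
    using r by (intro sum.cong) auto
  also have "\<dots> = (\<Sum>i\<in>I. c i * (\<Sum>s<n. B i $$ (r, s) * w $ s))"
    by (simp add: sum_distrib_left sum_distrib_right mult.assoc) (rule sum.swap)
  also have "\<dots> = (\<Sum>i\<in>I. c i * (B i *\<^sub>v w) $ r)"
    using assms by (intro sum.cong refl) (simp add: index_mult_mat_vec_sum[OF _ w r] del: index_mult_mat_vec)
  finally show ?thesis .
qed

theorem mat_poly_rank1_last_update:
  assumes d: "d > 0" and M: "M \<in> carrier_mat d d" and w: "w \<in> carrier_vec d"
    and X: "X \<in> carrier_mat d d" and Xinv: "Xinv \<in> carrier_mat d d"
    and inv1: "X * Xinv = 1\<^sub>m d" and inv2: "Xinv * X = 1\<^sub>m d"
    and diag: "M + rank1_last d w = X * mat_diag d lam * Xinv"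
  shows "mat_poly p (M + rank1_last d w) *\<^sub>v unit_vec d 0 - mat_poly p M *\<^sub>v unit_vec d 0
    = mat d d (\<lambda>(r, s). \<Sum>i<d. X $$ (d - 1, i) * Xinv $$ (i, 0) * mat_poly (synthetic_div p (lam i)) M $$ (r, s))
      *\<^sub>v w"
proof -
  let ?A = "M + rank1_last d w" and ?e = "unit_vec d 0"
  let ?c = "\<lambda>i. X $$ (d - 1, i) * Xinv $$ (i, 0)"
  have A: "?A \<in> carrier_mat d d" using M by simp
  have update: "?A *\<^sub>v y = M *\<^sub>v y + y $ (d - 1) \<cdot>\<^sub>v w" if "y \<in> carrier_vec d" for y
    using M w that d by (simp add: add_mult_distrib_mat_vec[of M d d] rank1_last_mult_vec)
  have spectral: "(mat_poly q ?A *\<^sub>v ?e) $ (d - 1) = (\<Sum>i<d. ?c i * poly q (lam i))" for q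
  proof -
    have "(mat_poly q ?A *\<^sub>v ?e) $ (d - 1) = (\<Sum>i<d. X $$ (d - 1, i) * (Xinv *\<^sub>v ?e) $ i * poly q (lam i))"
      unfolding diag by (rule index_mat_poly_diagonalizable_mult_vec[OF X Xinv inv1 inv2]) (use d in auto)
    also have "\<dots> = (\<Sum>i<d. ?c i * poly q (lam i))" using Xinv d by (intro sum.cong) auto
    finally show ?thesis .
  qed
  show ?thesis
  proof (rule eq_vecI)
    fix r assume "r < dim_vec (mat d d (\<lambda>(r, s). \<Sum>i<d. ?c i * mat_poly (synthetic_div p (lam i)) M $$ (r, s)) *\<^sub>v w)"
    then have r: "r < d" by simp
    have "(mat_poly p ?A *\<^sub>v ?e - mat_poly p M *\<^sub>v ?e) $ r = (mat_poly p ?A *\<^sub>v ?e) $ r - (mat_poly p M *\<^sub>v ?e) $ r"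
      using r M by simp
    also have "\<dots> = (\<Sum>i<d. ?c i * (mat_poly (synthetic_div p (lam i)) M *\<^sub>v w) $ r)"
      by (rule mat_poly_rank_one_update[OF A M w _ update spectral r]) simp
    also have "\<dots> = (mat d d (\<lambda>(r, s). \<Sum>i<d. ?c i * mat_poly (synthetic_div p (lam i)) M $$ (r, s)) *\<^sub>v w) $ r"
      by (rule index_lincomb_mat_mult_vec[symmetric]) (use M w r in auto)
    finally show "(mat_poly p ?A *\<^sub>v ?e - mat_poly p M *\<^sub>v ?e) $ r
      = (mat d d (\<lambda>(r, s). \<Sum>i<d. ?c i * mat_poly (synthetic_div p (lam i)) M $$ (r, s)) *\<^sub>v w) $ r" .
  qed (use M in simp)
qed

theorem theorem1:
  fixes d :: nat and M X Xinv :: "complex mat" and w :: "complex vec"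
    and lam :: "nat \<Rightarrow> complex" and f :: "complex \<Rightarrow> complex" and S :: "complex set"
  assumes d: "d > 0"
    and M: "M \<in> carrier_mat d d" and w: "w \<in> carrier_vec d"
    and X: "X \<in> carrier_mat d d" and Xinv: "Xinv \<in> carrier_mat d d"
    and inv1: "X * Xinv = 1\<^sub>m d" and inv2: "Xinv * X = 1\<^sub>m d"
    and eig: "M + rank1_last d w = X * mat d d (\<lambda>(i, j). if i = j then lam i else 0) * Xinv"
    and S: "open S" and hol: "f holomorphic_on S"
    and eigM: "\<And>z. eigenvalue M z \<Longrightarrow> z \<in> S"
    and eigMw: "\<And>z. eigenvalue (M + rank1_last d w) z \<Longrightarrow> z \<in> S"
  shows "mat_fun f (M + rank1_last d w) *\<^sub>v unit_vec d 0 - mat_fun f M *\<^sub>v unit_vec d 0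
         = g_w_mat f d X Xinv lam M *\<^sub>v w"
proof -
  have A: "M + rank1_last d w \<in> carrier_mat d d" using M by simp
  have "mat d d (\<lambda>(i, j). if i = j then lam i else 0) = mat_diag d lam"
    by (rule eq_matI) (auto simp: mat_diag_def)
  then have diag: "M + rank1_last d w = X * mat_diag d lam * Xinv" by (simp add: eig)
  then have "eigenvalue (M + rank1_last d w) (lam i)" if "i \<in> {..<d}" for i
    using diagonalizable_eigenvalue[OF X Xinv inv1 inv2] that by simp
  then obtain p where fA: "mat_fun f (M + rank1_last d w) = mat_poly p (M + rank1_last d w)"
    and fM: "mat_fun f M = mat_poly p M"
    and fD: "\<And>i. i \<in> {..<d} \<Longrightarrow> mat_fun (\<lambda>z. divdiff f z (lam i)) M = mat_poly (synthetic_div p (lam i)) M"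
    using exists_common_interpolant[OF A M S hol eigMw eigM] by blast
  have "g_w_mat f d X Xinv lam M
      = mat d d (\<lambda>(r, s). \<Sum>i<d. X $$ (d - 1, i) * Xinv $$ (i, 0) * mat_poly (synthetic_div p (lam i)) M $$ (r, s))"
    unfolding g_w_mat_def using fD by simp
  then show ?thesis
    unfolding fA fM by (simp add: mat_poly_rank1_last_update[OF d M w X Xinv inv1 inv2 diag])
qed

end
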